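(* Let $G$ be a countably infinite graph. (1) $G$ is HM-homogeneous iff it is HI-homogeneous iff it is HB-homogeneous iff it is HA-homogeneous iff $G\cong K_\omega$. (2) $G$ is MI-homogeneous iff it is MA-homogeneous iff $G\cong K_\omega$ or $G\cong I_\omega$.
   Context: All graphs are undirected and loopless; subgraphs are induced. A homomorphism maps adjacent vertices to adjacent vertices; a monomorphism is an injective homomorphism. For $\mathrm{X}\in\{\mathrm{H},\mathrm{M}\}$ an X-morphism is a homomorphism or monomorphism, respectively. For $\mathrm{Y}\in\{\mathrm{I},\mathrm{A},\mathrm{B},\mathrm{M}\}$, a Y-morphism $G\to G$ is, respectively, a self-embedding (injective map preserving adjacency and non-adjacency), an automorphism, a bijective endomorphism, or an injective endomorphism. $G$ is XY-homogeneous if every X-morphism between finite induced subgraphs of $G$ is the restriction of a Y-morphism $G\to G$. $K_\omega$ is the countable complete graph and $I_\omega$ the countable edgeless graph. *)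

theory Defs
  imports Main "HOL-Library.Countable_Set"
begin

text \<open>A graph on vertex type 'a is given by a symmetric irreflexive edge relation E.
  Finite induced subgraphs are given by finite vertex sets.\<close>

datatype xkind = XH | XM
datatype ykind = YI | YA | YB | YM

definition graph_hom_on :: "('a \<Rightarrow> 'a \<Rightarrow> bool) \<Rightarrow> 'a set \<Rightarrow> ('a \<Rightarrow> 'a) \<Rightarrow> bool" where
  "graph_hom_on E A f \<longleftrightarrow> (\<forall>x\<in>A. \<forall>y\<in>A. E x y \<longrightarrow> E (f x) (f y))"

definition x_morphism :: "xkind \<Rightarrow> ('a \<Rightarrow> 'a \<Rightarrow> bool) \<Rightarrow> 'a set \<Rightarrow> ('a \<Rightarrow> 'a) \<Rightarrow> bool" where
  "x_morphism X E A f \<longleftrightarrow>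
     (case X of XH \<Rightarrow> graph_hom_on E A f
              | XM \<Rightarrow> graph_hom_on E A f \<and> inj_on f A)"

definition y_morphism :: "ykind \<Rightarrow> ('a \<Rightarrow> 'a \<Rightarrow> bool) \<Rightarrow> ('a \<Rightarrow> 'a) \<Rightarrow> bool" where
  "y_morphism Y E g \<longleftrightarrow>
     (case Y of
        YI \<Rightarrow> inj g \<and> (\<forall>x y. E x y \<longleftrightarrow> E (g x) (g y))
      | YA \<Rightarrow> bij g \<and> (\<forall>x y. E x y \<longleftrightarrow> E (g x) (g y))
      | YB \<Rightarrow> bij g \<and> (\<forall>x y. E x y \<longrightarrow> E (g x) (g y))
      | YM \<Rightarrow> inj g \<and> (\<forall>x y. E x y \<longrightarrow> E (g x) (g y)))"

definition xy_homogeneous :: "xkind \<Rightarrow> ykind \<Rightarrow> ('a \<Rightarrow> 'a \<Rightarrow> bool) \<Rightarrow> bool" where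
  "xy_homogeneous X Y E \<longleftrightarrow>
     (\<forall>A B f. finite A \<and> finite B \<and> f ` A \<subseteq> B \<and> x_morphism X E A f \<longrightarrow>
        (\<exists>g. y_morphism Y E g \<and> (\<forall>x\<in>A. g x = f x)))"

definition graph_iso :: "('a \<Rightarrow> 'a \<Rightarrow> bool) \<Rightarrow> ('b \<Rightarrow> 'b \<Rightarrow> bool) \<Rightarrow> bool" where
  "graph_iso E E' \<longleftrightarrow> (\<exists>f. bij f \<and> (\<forall>x y. E x y \<longleftrightarrow> E' (f x) (f y)))"

definition K_omega :: "nat \<Rightarrow> nat \<Rightarrow> bool" where
  "K_omega x y \<longleftrightarrow> x \<noteq> y"

definition I_omega :: "nat \<Rightarrow> nat \<Rightarrow> bool" where
  "I_omega x y \<longleftrightarrow> False"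

end

theory Submission
  imports Defs
begin

text \<open>A homomorphism that extends to an injective endomorphism is itself injective, so
  collapsing two non-adjacent vertices forces HM-homogeneous graphs to be complete; and a
  monomorphism mapping a non-edge onto an edge can only extend to a map that changes adjacency,
  so MI-homogeneous graphs are complete or edgeless. Conversely, in a complete or edgeless
  graph every permutation is an automorphism, every finite injection extends to a permutation,
  and in a loopless complete graph every homomorphism is injective.\<close>

lemma finite_inj_on_extends_to_bij:
  fixes f :: "'a \<Rightarrow> 'a"
  assumes "finite A" and "inj_on f A"
  obtains g where "bij g" and "\<And>x. x \<in> A \<Longrightarrow> g x = f x"
proof -
  define S where "S = A \<union> f ` A"
  have "finite S" using assms(1) by (simp add: S_def)
  then have "card (S - A) = card (S - f ` A)"
    using assms by (simp add: S_def card_Diff_subset card_image)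
  then obtain h where h: "bij_betw h (S - A) (S - f ` A)"
    using \<open>finite S\<close> finite_same_card_bij by blast
  define g where "g x = (if x \<in> A then f x else if x \<in> S then h x else x)" for x
  have "bij_betw g A (f ` A)"
    using assms(2) by (simp add: g_def inj_on_imp_bij_betw cong: bij_betw_cong)
  moreover have "bij_betw g (S - A) (S - f ` A)"
    using h bij_betw_cong[of "S - A" g h] by (simp add: g_def)
  ultimately have "bij_betw g S S"
    using bij_betw_combine[of g A "f ` A" "S - A" "S - f ` A"] by (simp add: S_def Un_absorb1)
  moreover have "bij_betw g (- S) (- S)"
    using bij_betw_cong[of "- S" g id] by (simp add: g_def S_def)
  ultimately have "bij_betw g (S \<union> - S) (S \<union> - S)"
    by (rule bij_betw_combine) simp
  then show thesis
    using that by (simp add: g_def)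
qed

definition complete_graph :: "('a \<Rightarrow> 'a \<Rightarrow> bool) \<Rightarrow> bool" where
  "complete_graph E \<longleftrightarrow> (\<forall>x y. E x y \<longleftrightarrow> x \<noteq> y)"

definition edgeless_graph :: "('a \<Rightarrow> 'a \<Rightarrow> bool) \<Rightarrow> bool" where
  "edgeless_graph E \<longleftrightarrow> (\<forall>x y. \<not> E x y)"

lemma xy_homogeneous_mono:
  assumes "xy_homogeneous X Y E"
    and "\<And>A f. x_morphism X' E A f \<Longrightarrow> x_morphism X E A f"
    and "\<And>g. y_morphism Y E g \<Longrightarrow> y_morphism Y' E g"
  shows "xy_homogeneous X' Y' E"
  using assms unfolding xy_homogeneous_def by meson

lemma xy_homogeneousE:
  assumes "xy_homogeneous X Y E" and "finite A" and "x_morphism X E A f"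
  obtains g where "y_morphism Y E g" and "\<And>x. x \<in> A \<Longrightarrow> g x = f x"
  using assms unfolding xy_homogeneous_def by (meson finite_imageI order_refl)

lemma y_morphism_YA_imp_YB: "y_morphism YA E g \<Longrightarrow> y_morphism YB E g"
  by (simp add: y_morphism_def)

lemma y_morphism_YA_imp_YI: "y_morphism YA E g \<Longrightarrow> y_morphism YI E g"
  by (simp add: y_morphism_def bij_def)

lemma y_morphism_YB_imp_YM: "y_morphism YB E g \<Longrightarrow> y_morphism YM E g"
  by (simp add: y_morphism_def bij_def)

lemma y_morphism_YI_imp_YM: "y_morphism YI E g \<Longrightarrow> y_morphism YM E g"
  by (simp add: y_morphism_def)

lemma complete_graph_hom_is_mono:
  assumes "complete_graph E" and "x_morphism XH E A f"
  shows "x_morphism XM E A f"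
  using assms unfolding complete_graph_def x_morphism_def graph_hom_on_def inj_on_def
  by auto

lemma bij_is_automorphism:
  assumes "complete_graph E \<or> edgeless_graph E" and "bij g"
  shows "y_morphism YA E g"
  using assms unfolding y_morphism_def complete_graph_def edgeless_graph_def
  by (auto simp: bij_def inj_eq)

lemma xy_homogeneous_XM_YA_if_complete_or_edgeless:
  assumes "complete_graph E \<or> edgeless_graph E"
  shows "xy_homogeneous XM YA E"
  unfolding xy_homogeneous_def
proof (intro allI impI)
  fix A B f
  assume "finite A \<and> finite B \<and> f ` A \<subseteq> B \<and> x_morphism XM E A f"
  then have "finite A" and "inj_on f A" by (simp_all add: x_morphism_def)
  then obtain g where "bij g" and "\<And>x. x \<in> A \<Longrightarrow> g x = f x"
    using finite_inj_on_extends_to_bij by metis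
  then show "\<exists>g. y_morphism YA E g \<and> (\<forall>x\<in>A. g x = f x)"
    using bij_is_automorphism[OF assms] by blast
qed

lemma xy_homogeneous_XH_YA_if_complete:
  assumes "complete_graph E"
  shows "xy_homogeneous XH YA E"
proof (rule xy_homogeneous_mono)
  show "xy_homogeneous XM YA E"
    using assms by (simp add: xy_homogeneous_XM_YA_if_complete_or_edgeless)
qed (simp_all add: assms complete_graph_hom_is_mono)

lemma complete_if_xy_homogeneous_XH_YM:
  assumes "xy_homogeneous XH YM E" and "symp E" and "irreflp E"
  shows "complete_graph E"
  unfolding complete_graph_def
proof (intro allI iffI)
  fix x y
  show "E x y \<Longrightarrow> x \<noteq> y" using assms(3) by (auto simp: irreflp_def)
  assume "x \<noteq> y"
  show "E x y"
  proof (rule ccontr)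
    assume "\<not> E x y"
    moreover have "\<not> E y x" using \<open>\<not> E x y\<close> assms(2) by (meson sympD)
    moreover have "\<not> E x x" "\<not> E y y" using assms(3) by (simp_all add: irreflpD)
    ultimately have "x_morphism XH E {x, y} (\<lambda>_. x)"
      by (simp add: x_morphism_def graph_hom_on_def)
    then obtain g where "y_morphism YM E g" and "g x = x" and "g y = x"
      by (rule xy_homogeneousE[OF assms(1) finite.insertI[OF finite.insertI[OF finite.emptyI]]]) auto
    then have "inj g" and "g x = g y" by (simp_all add: y_morphism_def)
    then show False using \<open>x \<noteq> y\<close> by (simp add: inj_eq)
  qed
qed

lemma complete_or_edgeless_if_xy_homogeneous_XM_YI:
  assumes "xy_homogeneous XM YI E" and "symp E" and "irreflp E"
  shows "complete_graph E \<or> edgeless_graph E"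
proof (rule ccontr)
  assume "\<not> ?thesis"
  then obtain a b c d where "E a b" and "c \<noteq> d" and "\<not> E c d"
    unfolding complete_graph_def edgeless_graph_def using assms(3) by (auto simp: irreflp_def)
  have "\<not> E d c" using \<open>\<not> E c d\<close> assms(2) by (meson sympD)
  have "a \<noteq> b" using \<open>E a b\<close> assms(3) by (auto simp: irreflp_def)
  define f where "f z = (if z = c then a else b)" for z
  have "x_morphism XM E {c, d} f"
    using \<open>\<not> E c d\<close> \<open>\<not> E d c\<close> \<open>c \<noteq> d\<close> \<open>a \<noteq> b\<close> assms(3)
    by (simp add: x_morphism_def graph_hom_on_def f_def irreflpD)
  then obtain g where "y_morphism YI E g" and "g c = a" and "g d = b"
    by (rule xy_homogeneousE[OF assms(1) finite.insertI[OF finite.insertI[OF finite.emptyI]]])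
      (use \<open>c \<noteq> d\<close> in \<open>simp add: f_def\<close>)
  then have "E c d \<longleftrightarrow> E a b" by (auto simp: y_morphism_def)
  then show False
    using \<open>E a b\<close> \<open>\<not> E c d\<close> by blast
qed

lemma graph_iso_K_omega_iff_complete:
  fixes E :: "'a \<Rightarrow> 'a \<Rightarrow> bool"
  assumes "countable (UNIV :: 'a set)" and "infinite (UNIV :: 'a set)"
  shows "graph_iso E K_omega \<longleftrightarrow> complete_graph E"
proof
  assume "graph_iso E K_omega"
  then show "complete_graph E"
    by (auto simp: graph_iso_def complete_graph_def K_omega_def bij_def inj_eq)
next
  assume "complete_graph E"
  obtain e :: "'a \<Rightarrow> nat" where "bij e"
    using countableE_infinite assms by blast
  with \<open>complete_graph E\<close> show "graph_iso E K_omega"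
    by (auto simp: graph_iso_def complete_graph_def K_omega_def bij_def inj_eq)
qed

lemma graph_iso_I_omega_iff_edgeless:
  fixes E :: "'a \<Rightarrow> 'a \<Rightarrow> bool"
  assumes "countable (UNIV :: 'a set)" and "infinite (UNIV :: 'a set)"
  shows "graph_iso E I_omega \<longleftrightarrow> edgeless_graph E"
proof
  assume "graph_iso E I_omega"
  then show "edgeless_graph E"
    by (auto simp: graph_iso_def edgeless_graph_def I_omega_def)
next
  assume "edgeless_graph E"
  obtain e :: "'a \<Rightarrow> nat" where "bij e"
    using countableE_infinite assms by blast
  with \<open>edgeless_graph E\<close> show "graph_iso E I_omega"
    by (auto simp: graph_iso_def edgeless_graph_def I_omega_def)
qed

theorem theorem3p2:
  fixes E :: "'a \<Rightarrow> 'a \<Rightarrow> bool"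
  assumes "countable (UNIV :: 'a set)" and "infinite (UNIV :: 'a set)"
    and "symp E" and "irreflp E"
  shows "(xy_homogeneous XH YM E \<longleftrightarrow> xy_homogeneous XH YI E)
       \<and> (xy_homogeneous XH YI E \<longleftrightarrow> xy_homogeneous XH YB E)
       \<and> (xy_homogeneous XH YB E \<longleftrightarrow> xy_homogeneous XH YA E)
       \<and> (xy_homogeneous XH YA E \<longleftrightarrow> graph_iso E K_omega)
       \<and> (xy_homogeneous XM YI E \<longleftrightarrow> xy_homogeneous XM YA E)
       \<and> (xy_homogeneous XM YA E \<longleftrightarrow> graph_iso E K_omega \<or> graph_iso E I_omega)"
proof -
  have weaken: "\<And>Y Y'. xy_homogeneous X Y E \<Longrightarrow> (\<And>g. y_morphism Y E g \<Longrightarrow> y_morphism Y' E g)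
      \<Longrightarrow> xy_homogeneous X Y' E" for X
    by (erule xy_homogeneous_mono)
  note A_B = weaken[OF _ y_morphism_YA_imp_YB] and A_I = weaken[OF _ y_morphism_YA_imp_YI]
    and B_M = weaken[OF _ y_morphism_YB_imp_YM] and I_M = weaken[OF _ y_morphism_YI_imp_YM]
  have "xy_homogeneous XH Y E \<longleftrightarrow> complete_graph E" if "Y \<in> {YA, YB, YI, YM}" for Y
    using that complete_if_xy_homogeneous_XH_YM[OF _ assms(3,4)] xy_homogeneous_XH_YA_if_complete
      A_B A_I B_M I_M by blast
  moreover have "xy_homogeneous XM Y E \<longleftrightarrow> complete_graph E \<or> edgeless_graph E"
    if "Y \<in> {YA, YI}" for Y
    using that complete_or_edgeless_if_xy_homogeneous_XM_YI[OF _ assms(3,4)]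
      xy_homogeneous_XM_YA_if_complete_or_edgeless A_I by blast
  ultimately show ?thesis
    using graph_iso_K_omega_iff_complete[OF assms(1,2)] graph_iso_I_omega_iff_edgeless[OF assms(1,2)]
    by simp
qed

end
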